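(* Let $A=(a_{i,j})_{i,j\in\llbracket1,n\rrbracket}$ be a generalized Cartan matrix and $(\mathbb A,\Pi,\Pi^\vee)$ a generalized free realization of $A$. Let $W^v_{\mathbb A}$ be the subgroup of $GL(\mathbb A)$ generated by the reflections $r_i(v)=v-\alpha_i(v)\alpha_i^\vee$, and $Q^\vee_{\mathbb A}=\bigoplus_i\mathbb Z\alpha_i^\vee$. Then $W^v_{\mathbb A}$ stabilizes $Q^\vee_{\mathbb A}$ and the restriction map $W^v_{\mathbb A}\to\mathrm{Aut}_{\mathbb Z}(Q^\vee_{\mathbb A})$, $w\mapsto w|_{Q^\vee_{\mathbb A}}$, is injective.
   Context: A generalized Cartan matrix satisfies $a_{i,i}=2$, $a_{i,j}\in\mathbb Z_{\le0}$ for $i\ne j$, $a_{i,j}=0\iff a_{j,i}=0$. A generalized free realization of $A$ is a triple $(\mathbb A,\Pi,\Pi^\vee)$ with $\mathbb A$ a finite-dimensional real vector space, $\Pi=\{\alpha_1,\dots,\alpha_n\}\subset\mathbb A^*$ and $\Pi^\vee=\{\alpha_1^\vee,\dots,\alpha_n^\vee\}\subset\mathbb A$ both linearly independent families of cardinality $n$, with $\alpha_j(\alpha_i^\vee)=a_{i,j}$ for all $i,j$. *)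

theory Defs
  imports "HOL-Analysis.Analysis"
begin

text \<open>Indices are 0,...,n-1 (shifted from 1..n).\<close>

definition gen_cartan_matrix :: "nat \<Rightarrow> (nat \<Rightarrow> nat \<Rightarrow> int) \<Rightarrow> bool" where
  "gen_cartan_matrix n a \<longleftrightarrow>
     (\<forall>i<n. a i i = 2) \<and>
     (\<forall>i<n. \<forall>j<n. i \<noteq> j \<longrightarrow> a i j \<le> 0) \<and>
     (\<forall>i<n. \<forall>j<n. a i j = 0 \<longleftrightarrow> a j i = 0)"

definition lin_indep_forms :: "nat \<Rightarrow> (nat \<Rightarrow> 'a::real_vector \<Rightarrow> real) \<Rightarrow> bool" where
  "lin_indep_forms n \<alpha> \<longleftrightarrow>
     (\<forall>c::nat \<Rightarrow> real. (\<forall>v. (\<Sum>i<n. c i * \<alpha> i v) = 0) \<longrightarrow> (\<forall>i<n. c i = 0))"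

definition lin_indep_family :: "nat \<Rightarrow> (nat \<Rightarrow> 'a::real_vector) \<Rightarrow> bool" where
  "lin_indep_family n x \<longleftrightarrow>
     (\<forall>c::nat \<Rightarrow> real. (\<Sum>i<n. c i *\<^sub>R x i) = 0 \<longrightarrow> (\<forall>i<n. c i = 0))"

definition gen_free_realization ::
  "nat \<Rightarrow> (nat \<Rightarrow> nat \<Rightarrow> int) \<Rightarrow> (nat \<Rightarrow> 'a::euclidean_space \<Rightarrow> real) \<Rightarrow> (nat \<Rightarrow> 'a) \<Rightarrow> bool" where
  "gen_free_realization n a \<alpha> \<alpha>v \<longleftrightarrow>
     (\<forall>i<n. linear (\<alpha> i)) \<and> lin_indep_forms n \<alpha> \<and> lin_indep_family n \<alpha>v \<and>
     (\<forall>i<n. \<forall>j<n. \<alpha> j (\<alpha>v i) = of_int (a i j))"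

definition simple_refl :: "(nat \<Rightarrow> 'a::real_vector \<Rightarrow> real) \<Rightarrow> (nat \<Rightarrow> 'a) \<Rightarrow> nat \<Rightarrow> 'a \<Rightarrow> 'a" where
  "simple_refl \<alpha> \<alpha>v i v = v - \<alpha> i v *\<^sub>R \<alpha>v i"

inductive_set weyl_group :: "nat \<Rightarrow> (nat \<Rightarrow> 'a::real_vector \<Rightarrow> real) \<Rightarrow> (nat \<Rightarrow> 'a) \<Rightarrow> ('a \<Rightarrow> 'a) set"
  for n \<alpha> \<alpha>v where
  id: "id \<in> weyl_group n \<alpha> \<alpha>v"
| gen: "i < n \<Longrightarrow> simple_refl \<alpha> \<alpha>v i \<in> weyl_group n \<alpha> \<alpha>v"
| comp: "w \<in> weyl_group n \<alpha> \<alpha>v \<Longrightarrow> w' \<in> weyl_group n \<alpha> \<alpha>v \<Longrightarrow> w \<circ> w' \<in> weyl_group n \<alpha> \<alpha>v"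
| inverse: "w \<in> weyl_group n \<alpha> \<alpha>v \<Longrightarrow> inv w \<in> weyl_group n \<alpha> \<alpha>v"

definition coroot_lattice :: "nat \<Rightarrow> (nat \<Rightarrow> 'a::real_vector) \<Rightarrow> 'a set" where
  "coroot_lattice n \<alpha>v = {\<Sum>i<n. of_int (k i) *\<^sub>R \<alpha>v i | k :: nat \<Rightarrow> int. True}"

end

theory Submission
  imports Defs
begin

(* Each simple reflection sends the lattice vector x to x - \<alpha>_i(x) \<alpha>_i^\<or> with \<alpha>_i(x) an
   integer (\<alpha>_i(\<alpha>_j^\<or>) = a_ji), so W stabilises Q^\<or>. Injectivity amounts to: an element of W
   fixing every \<alpha>_i^\<or> is the identity.

   The key fact is positivity: if \<ell>(w r_i) \<ge> \<ell>(w), then w(\<alpha>_i^\<or>) is a nonnegative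
   combination of the \<alpha>_j^\<or>. It is proved by induction on \<ell>(w), as for Coxeter groups: let
   r_j be the last letter of a reduced word of w and factor w = v u with u in the dihedral group
   <r_i, r_j>, \<ell>(w) = \<ell>(v) + \<ell>(u) and \<ell>(v) minimal. Then v has ascents at i and j, so by
   induction v maps \<alpha>_i^\<or> and \<alpha>_j^\<or> into the positive cone, while an explicit rank-2
   computation (separating a_ij a_ji \<ge> 4 from the finite types A1xA1, A2, B2, G2) shows that
   u(\<alpha>_i^\<or>) is a nonnegative combination of \<alpha>_i^\<or> and \<alpha>_j^\<or>.

   Now if w \<noteq> 1 fixes all coroots, write w = w' r_i with \<ell>(w') < \<ell>(w): positivity gives
   w'(\<alpha>_i^\<or>) \<ge> 0, but w'(\<alpha>_i^\<or>) = w(-\<alpha>_i^\<or>) = -\<alpha>_i^\<or>, contradicting linear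
   independence of the coroots. *)

section \<open>Rank-two combinatorics\<close>

fun alt_word :: "'b \<Rightarrow> 'b \<Rightarrow> nat \<Rightarrow> 'b list" where
  "alt_word x y 0 = []"
| "alt_word x y (Suc k) = alt_word y x k @ [x]"

lemma alt_word_Suc_Cons: "alt_word x y (Suc k) = (if even k then x else y) # alt_word x y k"
  by (induction k arbitrary: x y) auto

lemma length_alt_word [simp]: "length (alt_word x y k) = k"
  by (induction k arbitrary: x y) auto

lemma alt_word_in_lists: "x \<in> A \<Longrightarrow> y \<in> A \<Longrightarrow> alt_word x y k \<in> lists A"
  by (induction k arbitrary: x y) auto

lemma alt_word_add:
  "alt_word x y (k + l) = (if even l then alt_word x y k else alt_word y x k) @ alt_word x y l"
  by (induction l arbitrary: x y) auto

lemma alternating_word_cases: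
  assumes "us \<in> lists {x, y}" and "\<forall>p z q. us \<noteq> p @ z # z # q"
  shows "us = alt_word x y (length us) \<or> us = alt_word y x (length us)"
  using assms
proof (induction us rule: rev_induct)
  case Nil
  then show ?case by simp
next
  case (snoc z us)
  have "\<forall>p z q. us \<noteq> p @ z # z # q"
    using snoc.prems(2) by (metis append.assoc append_Cons)
  with snoc have IH: "us = alt_word x y (length us) \<or> us = alt_word y x (length us)" by auto
  show ?case
  proof (cases "length us")
    case 0
    then show ?thesis using snoc.prems(1) by auto
  next
    case (Suc L)
    have "z \<noteq> last us"
      using snoc.prems(2) Suc
      by (metis append_butlast_last_id append.assoc append_Cons append_Nil list.size(3) nat.distinct(1))
    with IH Suc snoc.prems(1) show ?thesis by auto
  qed
qed

text \<open>With \<open>x = -a\<^sub>i\<^sub>j\<close> and \<open>y = -a\<^sub>j\<^sub>i\<close>, these are the coordinates of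
  \<open>\<dots> r\<^sub>i r\<^sub>j (\<alpha>\<^sub>i\<^sup>\<or>)\<close> (k reflections) in the basis \<open>\<alpha>\<^sub>i\<^sup>\<or>, \<alpha>\<^sub>j\<^sup>\<or>\<close>.\<close>
fun dihedral_coeffs :: "real \<Rightarrow> real \<Rightarrow> nat \<Rightarrow> real \<times> real" where
  "dihedral_coeffs x y 0 = (1, 0)"
| "dihedral_coeffs x y (Suc k) =
     (let (A, B) = dihedral_coeffs x y k in if even k then (A, x * A - B) else (y * B - A, B))"

lemma dihedral_coeffs_invariant:
  assumes x: "x \<ge> 0" and y: "y \<ge> 0" and xy: "x * y \<ge> 4"
  shows "fst (dihedral_coeffs x y k) \<ge> 0 \<and> snd (dihedral_coeffs x y k) \<ge> 0 \<and>
    (if even k then 2 * snd (dihedral_coeffs x y k) \<le> x * fst (dihedral_coeffs x y k)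
     else 2 * fst (dihedral_coeffs x y k) \<le> y * snd (dihedral_coeffs x y k))"
proof (induction k)
  case 0
  then show ?case using x by simp
next
  case (Suc k)
  obtain A B where AB: "dihedral_coeffs x y k = (A, B)" by fastforce
  show ?case
  proof (cases "even k")
    case True
    with Suc AB have h: "A \<ge> 0" "B \<ge> 0" "2 * B \<le> x * A" by auto
    have "y * (2 * B) \<le> y * (x * A)" using h(3) y by (rule mult_left_mono)
    moreover have "4 * A \<le> x * y * A" using xy h(1) by (rule mult_right_mono)
    ultimately have "2 * A \<le> y * (x * A - B)" by (simp add: algebra_simps)
    then show ?thesis using AB True h by auto
  next
    case False
    with Suc AB have h: "A \<ge> 0" "B \<ge> 0" "2 * A \<le> y * B" by auto
    have "x * (2 * A) \<le> x * (y * B)" using h(3) x by (rule mult_left_mono)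
    moreover have "4 * B \<le> x * y * B" using xy h(2) by (rule mult_right_mono)
    ultimately have "2 * B \<le> x * (y * B - A)" by (simp add: algebra_simps)
    then show ?thesis using AB False h by auto
  qed
qed

lemma dihedral_coeffs_nonneg_if_prod_ge_4:
  assumes "x \<ge> 0" and "y \<ge> 0" and "x * y \<ge> 4"
  shows "fst (dihedral_coeffs x y k) \<ge> 0 \<and> snd (dihedral_coeffs x y k) \<ge> 0"
  using dihedral_coeffs_invariant[OF assms, of k] by blast

text \<open>The rank-2 Cartan matrices of finite type: \<open>A\<^sub>1\<times>A\<^sub>1\<close>, \<open>A\<^sub>2\<close>, \<open>B\<^sub>2\<close> and \<open>G\<^sub>2\<close>.\<close>
definition finite_cartan_pairs :: "(int \<times> int) set" where
  "finite_cartan_pairs = {(0, 0), (-1, -1), (-1, -2), (-2, -1), (-1, -3), (-3, -1)}"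

definition dihedral_order :: "int \<Rightarrow> nat" where
  "dihedral_order pq = (if pq = 0 then 2 else if pq = 1 then 3 else if pq = 2 then 4 else 6)"

lemma finite_cartan_pairsI:
  fixes p q :: int
  assumes "p \<le> 0" "q \<le> 0" "p = 0 \<longleftrightarrow> q = 0" "p * q < 4"
  shows "(p, q) \<in> finite_cartan_pairs"
proof (cases "p = 0")
  case False
  then have "p \<le> -1" "q \<le> -1" using assms by auto
  then have "- p \<le> (- p) * (- q)" "- q \<le> (- p) * (- q)"
    using mult_left_mono[of 1 "- q" "- p"] mult_right_mono[of 1 "- p" "- q"] by auto
  then have "p \<in> {-3, -2, -1}" "q \<in> {-3, -2, -1}"
    using \<open>p \<le> -1\<close> \<open>q \<le> -1\<close> assms(4) by auto
  then show ?thesis using assms(4) by (auto simp: finite_cartan_pairs_def)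
qed (use assms in \<open>auto simp: finite_cartan_pairs_def\<close>)

lemma dihedral_coeffs_nonneg_finite_type:
  assumes "(p, q) \<in> finite_cartan_pairs" and "k < dihedral_order (p * q)"
  shows "fst (dihedral_coeffs (- of_int p) (- of_int q) k) \<ge> 0
       \<and> snd (dihedral_coeffs (- of_int p) (- of_int q) k) \<ge> 0"
  using assms by (auto simp: finite_cartan_pairs_def dihedral_order_def less_Suc_eq numeral_eq_Suc)

locale cartan_realization =
  fixes n :: nat and a :: "nat \<Rightarrow> nat \<Rightarrow> int"
    and \<alpha> :: "nat \<Rightarrow> 'a::euclidean_space \<Rightarrow> real" and \<alpha>v :: "nat \<Rightarrow> 'a"
  assumes cartan: "gen_cartan_matrix n a"
    and realization: "gen_free_realization n a \<alpha> \<alpha>v"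
begin

abbreviation r :: "nat \<Rightarrow> 'a \<Rightarrow> 'a" where "r \<equiv> simple_refl \<alpha> \<alpha>v"

definition rword :: "nat list \<Rightarrow> 'a \<Rightarrow> 'a" where
  "rword ws = foldr (\<lambda>i f. r i \<circ> f) ws id"

definition refl_length :: "('a \<Rightarrow> 'a) \<Rightarrow> nat" where
  "refl_length w = (LEAST k. \<exists>ws\<in>lists {..<n}. length ws = k \<and> rword ws = w)"

definition coroot_cone :: "'a set" where
  "coroot_cone = {\<Sum>k<n. c k *\<^sub>R \<alpha>v k | c. \<forall>k<n. c k \<ge> 0}"

lemma linear_root: "i < n \<Longrightarrow> linear (\<alpha> i)"
  using realization unfolding gen_free_realization_def by auto

lemma root_coroot: "i < n \<Longrightarrow> j < n \<Longrightarrow> \<alpha> j (\<alpha>v i) = of_int (a i j)"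
  using realization unfolding gen_free_realization_def by auto

lemma cartan_diag: "i < n \<Longrightarrow> a i i = 2"
  using cartan unfolding gen_cartan_matrix_def by auto

lemma root_coroot_diag: "i < n \<Longrightarrow> \<alpha> i (\<alpha>v i) = 2"
  by (simp add: root_coroot cartan_diag)

lemma lin_indep_coroots: "lin_indep_family n \<alpha>v"
  using realization unfolding gen_free_realization_def by auto

lemma r_apply: "r i v = v - \<alpha> i v *\<^sub>R \<alpha>v i"
  by (simp add: simple_refl_def)

lemma scaleR_times_2: "(c * 2) *\<^sub>R (x::'a) = c *\<^sub>R x + c *\<^sub>R x"
  by (simp add: scaleR_add_left[symmetric])

lemma linear_r: "i < n \<Longrightarrow> linear (r i)"
  by (rule linearI)
    (auto simp: r_apply linear_add[OF linear_root] linear_scale[OF linear_root] algebra_simps)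

lemma r_r [simp]: "i < n \<Longrightarrow> r i (r i v) = v"
  by (simp add: r_apply linear_diff[OF linear_root] linear_scale[OF linear_root]
      root_coroot_diag algebra_simps)

lemma r_comp_r: "i < n \<Longrightarrow> r i \<circ> r i = id"
  by auto

lemma r_coroot: "i < n \<Longrightarrow> r i (\<alpha>v i) = - \<alpha>v i"
  by (simp add: r_apply root_coroot_diag scaleR_2)

lemma rword_Nil [simp]: "rword [] = id"
  by (simp add: rword_def)

lemma rword_Cons [simp]: "rword (i # ws) = r i \<circ> rword ws"
  by (simp add: rword_def)

lemma rword_append: "rword (ws @ vs) = rword ws \<circ> rword vs"
  by (induction ws) auto

lemma rword_snoc: "rword (ws @ [i]) = rword ws \<circ> r i"
  by (simp add: rword_append)

lemma linear_rword: "ws \<in> lists {..<n} \<Longrightarrow> linear (rword ws)"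
  by (induction ws) (auto intro: linear_compose linear_r simp: linear_id)

lemma rword_rev_comp: "ws \<in> lists {..<n} \<Longrightarrow> rword (rev ws) \<circ> rword ws = id"
proof (induction ws)
  case (Cons i ws)
  have "rword (rev (i # ws)) \<circ> rword (i # ws) = rword (rev ws) \<circ> (r i \<circ> r i) \<circ> rword ws"
    by (simp add: rword_append comp_assoc)
  also have "\<dots> = rword (rev ws) \<circ> rword ws"
    using Cons.prems by (simp add: r_comp_r)
  also have "\<dots> = id"
    using Cons by (simp add: comp_def id_def)
  finally show ?case .
qed simp

lemma rword_comp_rev: "ws \<in> lists {..<n} \<Longrightarrow> rword ws \<circ> rword (rev ws) = id"
  using rword_rev_comp[of "rev ws"] by (simp add: in_lists_conv_set)

lemma weyl_group_rword:
  assumes "w \<in> weyl_group n \<alpha> \<alpha>v"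
  obtains ws where "ws \<in> lists {..<n}" "rword ws = w"
proof -
  from assms have "\<exists>ws\<in>lists {..<n}. rword ws = w"
  proof (induction rule: weyl_group.induct)
    case id
    show ?case by (intro bexI[of _ "[]"]) auto
  next
    case (gen i)
    then show ?case by (intro bexI[of _ "[i]"]) auto
  next
    case (comp w w')
    then show ?case by (metis append_in_lists_conv rword_append)
  next
    case (inverse w)
    then obtain ws where ws: "ws \<in> lists {..<n}" "rword ws = w" by blast
    then have "inv w = rword (rev ws)"
      by (metis inv_unique_comp rword_comp_rev rword_rev_comp)
    then show ?case using ws by (intro bexI[of _ "rev ws"]) auto
  qed
  then show ?thesis using that by blast
qed

lemma refl_length_le: "ws \<in> lists {..<n} \<Longrightarrow> refl_length (rword ws) \<le> length ws"
  unfolding refl_length_def by (rule Least_le) auto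

lemma reduced_word_exists:
  assumes "ws \<in> lists {..<n}"
  obtains vs where "vs \<in> lists {..<n}" "length vs = refl_length (rword ws)" "rword vs = rword ws"
proof -
  have "\<exists>vs\<in>lists {..<n}. length vs = refl_length (rword ws) \<and> rword vs = rword ws"
    unfolding refl_length_def by (rule LeastI_ex) (use assms in auto)
  then show ?thesis using that by blast
qed

lemma refl_length_comp_le:
  assumes "vs \<in> lists {..<n}" "us \<in> lists {..<n}"
  shows "refl_length (rword vs \<circ> rword us) \<le> refl_length (rword vs) + length us"
proof -
  obtain vs' where "vs' \<in> lists {..<n}" "length vs' = refl_length (rword vs)" "rword vs' = rword vs"
    using reduced_word_exists[OF assms(1)] .
  with refl_length_le[of "vs' @ us"] assms(2) show ?thesis by (simp add: rword_append)
qed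

lemma coroot_cone_add:
  assumes "u \<in> coroot_cone" and "v \<in> coroot_cone"
  shows "u + v \<in> coroot_cone"
proof -
  obtain c d where "\<forall>k<n. c k \<ge> 0" "u = (\<Sum>k<n. c k *\<^sub>R \<alpha>v k)"
    and "\<forall>k<n. d k \<ge> 0" "v = (\<Sum>k<n. d k *\<^sub>R \<alpha>v k)"
    using assms unfolding coroot_cone_def by blast
  then show ?thesis
    unfolding coroot_cone_def
    by (intro CollectI exI[of _ "\<lambda>k. c k + d k"]) (auto simp: scaleR_add_left sum.distrib)
qed

lemma coroot_cone_scaleR:
  assumes "u \<in> coroot_cone" and "t \<ge> 0"
  shows "t *\<^sub>R u \<in> coroot_cone"
proof -
  obtain c where "\<forall>k<n. c k \<ge> 0" "u = (\<Sum>k<n. c k *\<^sub>R \<alpha>v k)"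
    using assms(1) unfolding coroot_cone_def by blast
  with assms(2) show ?thesis
    unfolding coroot_cone_def
    by (intro CollectI exI[of _ "\<lambda>k. t * c k"]) (auto simp: scaleR_sum_right)
qed

lemma sum_delta_coroot: "i < n \<Longrightarrow> (\<Sum>k<n. (if k = i then c else 0) *\<^sub>R \<alpha>v k) = c *\<^sub>R \<alpha>v i"
  by (simp add: if_distrib[of "\<lambda>t. t *\<^sub>R _"] cong: if_cong)

lemma coroot_in_coroot_cone: "i < n \<Longrightarrow> \<alpha>v i \<in> coroot_cone"
  unfolding coroot_cone_def
  by (intro CollectI exI[of _ "\<lambda>k. if k = i then 1 else 0"]) (auto simp: sum_delta_coroot)

lemma neg_coroot_notin_coroot_cone:
  assumes i: "i < n"
  shows "- \<alpha>v i \<notin> coroot_cone"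
proof
  assume "- \<alpha>v i \<in> coroot_cone"
  then obtain c where c: "\<forall>k<n. c k \<ge> 0" "- \<alpha>v i = (\<Sum>k<n. c k *\<^sub>R \<alpha>v k)"
    unfolding coroot_cone_def by blast
  have "(\<Sum>k<n. (c k + (if k = i then 1 else 0)) *\<^sub>R \<alpha>v k) = 0"
    using c(2)[symmetric] i by (simp add: scaleR_add_left sum.distrib sum_delta_coroot)
  then have "c i + 1 = 0"
    using lin_indep_coroots i unfolding lin_indep_family_def by fastforce
  then show False using c(1) i by force
qed

lemma rword_alt_word_coroot:
  assumes i: "i < n" and j: "j < n"
  shows "rword (alt_word j i k) (\<alpha>v i) =
           fst (dihedral_coeffs (- of_int (a i j)) (- of_int (a j i)) k) *\<^sub>R \<alpha>v i
         + snd (dihedral_coeffs (- of_int (a i j)) (- of_int (a j i)) k) *\<^sub>R \<alpha>v j"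
proof (induction k)
  case (Suc k)
  obtain A B where "dihedral_coeffs (- of_int (a i j)) (- of_int (a j i)) k = (A, B)"
    by fastforce
  moreover have "rword (alt_word j i (Suc k)) = r (if even k then j else i) \<circ> rword (alt_word j i k)"
    by (simp only: alt_word_Suc_Cons rword_Cons)
  ultimately show ?case using Suc i j
    by (auto simp: scaleR_times_2 r_apply linear_add[OF linear_root]
        linear_scale[OF linear_root] root_coroot cartan_diag algebra_simps)
qed simp

text \<open>Both reflections preserve the affine plane \<open>v + \<real>\<alpha>\<^sub>i\<^sup>\<or> + \<real>\<alpha>\<^sub>j\<^sup>\<or>\<close>, on which
  they act by explicit affine maps of the coordinates; the relation is then checked
  by computing the orbit of \<open>(0, 0)\<close>.\<close>
lemma rword_alt_word_dihedral_order:
  assumes i: "i < n" and j: "j < n" and fin: "(a i j, a j i) \<in> finite_cartan_pairs"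
  shows "rword (alt_word i j (2 * dihedral_order (a i j * a j i))) = id"
proof
  fix v
  define S where "S c d = v + c *\<^sub>R \<alpha>v i + d *\<^sub>R \<alpha>v j" for c d
  have ri: "r i (S c d) = S (- c - \<alpha> i v - d * of_int (a j i)) d" for c d
    using i j by (simp add: scaleR_times_2 S_def r_apply linear_add[OF linear_root]
        linear_scale[OF linear_root] root_coroot cartan_diag algebra_simps)
  have rj: "r j (S c d) = S c (- d - \<alpha> j v - c * of_int (a i j))" for c d
    using i j by (simp add: scaleR_times_2 S_def r_apply linear_add[OF linear_root]
        linear_scale[OF linear_root] root_coroot cartan_diag algebra_simps)
  have "rword (alt_word i j (2 * dihedral_order (a i j * a j i))) (S 0 0) = S 0 0"
    using fin by (auto simp: finite_cartan_pairs_def dihedral_order_def numeral_eq_Suc ri rj)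
  then show "rword (alt_word i j (2 * dihedral_order (a i j * a j i))) v = id v"
    by (simp add: S_def)
qed

lemma alt_word_shorter_if_period:
  assumes i: "i < n" and j: "j < n"
    and period: "rword (alt_word i j (2 * m)) = id" and "0 < m" "m < L"
  obtains u where "u \<in> lists {i, j}" "Suc (length u) < L" "rword u = rword (alt_word i j L)"
proof (cases "2 * m \<le> L")
  case True
  define u where "u = (if even (2 * m) then alt_word i j (L - 2 * m) else alt_word j i (L - 2 * m))"
  have "alt_word i j L = u @ alt_word i j (2 * m)"
    using alt_word_add[of i j "L - 2 * m" "2 * m"] True by (simp add: u_def)
  then have "rword u = rword (alt_word i j L)"
    using period by (simp add: rword_append)
  moreover have "u \<in> lists {i, j}" "Suc (length u) < L"
    using \<open>0 < m\<close> True by (auto simp: u_def alt_word_in_lists)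
  ultimately show ?thesis using that by blast
next
  case False
  define u where "u = (if even L then alt_word i j (2 * m - L) else alt_word j i (2 * m - L))"
  have "alt_word i j (2 * m) = u @ alt_word i j L"
    using alt_word_add[of i j "2 * m - L" L] False by (simp add: u_def)
  then have inverse: "rword u \<circ> rword (alt_word i j L) = id"
    using period by (simp add: rword_append)
  have u: "u \<in> lists {i, j}"
    by (auto simp: u_def alt_word_in_lists)
  then have "u \<in> lists {..<n}"
    using i j by auto
  then have "rword (rev u) = rword (rev u) \<circ> (rword u \<circ> rword (alt_word i j L))"
    using inverse by simp
  also have "\<dots> = rword (alt_word i j L)"
    using rword_rev_comp[OF \<open>u \<in> lists {..<n}\<close>] by (simp add: comp_assoc[symmetric])
  finally have "rword (rev u) = rword (alt_word i j L)" .
  moreover have "rev u \<in> lists {i, j}" "Suc (length (rev u)) < L"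
    using u False \<open>m < L\<close> by (auto simp: u_def)
  ultimately show ?thesis
    using that by blast
qed

lemma reduced_dihedral_word_eq_alt_word:
  assumes i: "i < n" and j: "j < n" and us: "us \<in> lists {i, j}"
    and reduced: "\<And>u. u \<in> lists {i, j} \<Longrightarrow> rword u = rword us \<Longrightarrow> length us \<le> length u"
    and ascent: "\<And>u. u \<in> lists {i, j} \<Longrightarrow> rword u = rword us \<circ> r i \<Longrightarrow> length us \<le> length u"
  shows "us = alt_word j i (length us)"
proof -
  have "\<forall>p x q. us \<noteq> p @ x # x # q"
  proof (intro allI notI)
    fix p x q
    assume square: "us = p @ x # x # q"
    then have word: "p @ q \<in> lists {i, j}" and "x \<in> {i, j}"
      using us by simp_all
    then have "x < n"
      using i j by blast
    with square have "rword (p @ q) = rword us"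
      by (simp add: rword_append fun_eq_iff)
    then have "length us \<le> length (p @ q)"
      by (rule reduced[OF word])
    then show False
      unfolding square by simp
  qed
  then have "us = alt_word i j (length us) \<or> us = alt_word j i (length us)"
    by (rule alternating_word_cases[OF us])
  moreover have "us \<noteq> alt_word i j (Suc L)" for L
  proof
    assume alt: "us = alt_word i j (Suc L)"
    have "rword (alt_word j i L) = rword (alt_word j i L) \<circ> (r i \<circ> r i)"
      using i by (simp add: r_comp_r)
    also have "\<dots> = rword us \<circ> r i"
      unfolding alt by (simp add: rword_snoc comp_assoc)
    finally have "length us \<le> length (alt_word j i L)"
      by (rule ascent[rotated]) (simp add: alt_word_in_lists)
    then show False
      unfolding alt by simp
  qed
  ultimately show ?thesis
    by (metis alt_word.simps(1) length_0_conv not0_implies_Suc)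
qed

lemma dihedral_coroot_in_cone:
  assumes i: "i < n" and j: "j < n" and "i \<noteq> j" and us: "us \<in> lists {i, j}"
    and reduced: "\<And>u. u \<in> lists {i, j} \<Longrightarrow> rword u = rword us \<Longrightarrow> length us \<le> length u"
    and ascent: "\<And>u. u \<in> lists {i, j} \<Longrightarrow> rword u = rword us \<circ> r i \<Longrightarrow> length us \<le> length u"
  obtains A B where "A \<ge> 0" "B \<ge> 0" "rword us (\<alpha>v i) = A *\<^sub>R \<alpha>v i + B *\<^sub>R \<alpha>v j"
proof -
  define k where "k = length us"
  define x where "x = - (of_int (a i j) :: real)"
  define y where "y = - (of_int (a j i) :: real)"
  have us_alt: "us = alt_word j i k"
    unfolding k_def by (rule reduced_dihedral_word_eq_alt_word[OF i j us reduced ascent])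
  then have coords: "rword us (\<alpha>v i) =
      fst (dihedral_coeffs x y k) *\<^sub>R \<alpha>v i + snd (dihedral_coeffs x y k) *\<^sub>R \<alpha>v j"
    using rword_alt_word_coroot[OF i j] by (simp add: x_def y_def)
  have nonpos: "a i j \<le> 0" "a j i \<le> 0" "a i j = 0 \<longleftrightarrow> a j i = 0"
    using cartan i j \<open>i \<noteq> j\<close> unfolding gen_cartan_matrix_def by auto
  have "fst (dihedral_coeffs x y k) \<ge> 0 \<and> snd (dihedral_coeffs x y k) \<ge> 0"
  proof (cases "x * y \<ge> 4")
    case True
    moreover have "x \<ge> 0" "y \<ge> 0"
      using nonpos by (auto simp: x_def y_def)
    ultimately show ?thesis
      using dihedral_coeffs_nonneg_if_prod_ge_4 by blast
  next
    case False
    then have fin: "(a i j, a j i) \<in> finite_cartan_pairs"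
      using nonpos by (intro finite_cartan_pairsI) (auto simp: x_def y_def simp flip: of_int_mult)
    define m where "m = dihedral_order (a i j * a j i)"
    have "k < m"
    proof (rule ccontr)
      assume "\<not> k < m"
      moreover have "rword (alt_word i j (2 * m)) = id" "0 < m"
        using rword_alt_word_dihedral_order[OF i j fin] by (auto simp: m_def dihedral_order_def)
      ultimately obtain u where u: "u \<in> lists {i, j}" and "Suc (length u) < Suc k"
          and "rword u = rword (alt_word i j (Suc k))"
        using alt_word_shorter_if_period[OF i j] by (metis less_Suc_eq_le not_less)
      then have "rword u = rword us \<circ> r i"
        by (simp add: us_alt rword_snoc)
      then have "length us \<le> length u"
        by (rule ascent[OF u])
      with \<open>Suc (length u) < Suc k\<close> show False
        by (simp add: k_def)
    qed
    then show ?thesis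
      using dihedral_coeffs_nonneg_finite_type[OF fin] by (simp add: x_def y_def m_def)
  qed
  with coords that show ?thesis by blast
qed

section \<open>Positivity of images of coroots\<close>

lemma minimal_parabolic_factorization:
  assumes i: "i < n" and j: "j < n"
    and vs0: "vs0 \<in> lists {..<n}" and us0: "us0 \<in> lists {i, j}"
    and fact0: "refl_length (rword vs0) + length us0 = refl_length (rword vs0 \<circ> rword us0)"
  obtains vs us where "vs \<in> lists {..<n}" "us \<in> lists {i, j}"
    "rword vs \<circ> rword us = rword vs0 \<circ> rword us0"
    "refl_length (rword vs) + length us = refl_length (rword vs0 \<circ> rword us0)"
    "refl_length (rword vs) \<le> refl_length (rword vs0)"
    "\<And>t. t \<in> {i, j} \<Longrightarrow> refl_length (rword vs) \<le> refl_length (rword vs \<circ> r t)"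
proof -
  define w where "w = rword vs0 \<circ> rword us0"
  define factorization where "factorization = (\<lambda>(vs, us). vs \<in> lists {..<n} \<and> us \<in> lists {i, j} \<and>
      rword vs \<circ> rword us = w \<and> refl_length (rword vs) + length us = refl_length w)"
  have lower: "refl_length w \<le> refl_length (rword vs) + length us"
    if "vs \<in> lists {..<n}" "us \<in> lists {i, j}" "rword vs \<circ> rword us = w" for vs us
  proof -
    have "us \<in> lists {..<n}"
      using that(2) i j by auto
    then have "refl_length (rword vs \<circ> rword us) \<le> refl_length (rword vs) + length us"
      by (rule refl_length_comp_le[OF that(1)])
    with that(3) show ?thesis
      by simp
  qed
  have "factorization (vs0, us0)"
    using vs0 us0 fact0 by (simp add: factorization_def w_def)
  then obtain p where "factorization p"
    and p_min: "\<And>q. factorization q \<Longrightarrow> refl_length (rword (fst p)) \<le> refl_length (rword (fst q))"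
    using ex_has_least_nat[of factorization "(vs0, us0)" "\<lambda>q. refl_length (rword (fst q))"] by blast
  obtain vs us where p: "p = (vs, us)"
    by fastforce
  have vs: "vs \<in> lists {..<n}" and us: "us \<in> lists {i, j}" and w: "rword vs \<circ> rword us = w"
    and len: "refl_length (rword vs) + length us = refl_length w"
    using \<open>factorization p\<close> by (auto simp: factorization_def p)
  have "refl_length (rword vs) \<le> refl_length (rword vs \<circ> r t)" if t: "t \<in> {i, j}" for t
  proof (rule ccontr)
    assume shorter: "\<not> ?thesis"
    have tn: "t < n"
      using t i j by auto
    have vs': "vs @ [t] \<in> lists {..<n}" and us': "t # us \<in> lists {i, j}"
      using vs us t tn by auto
    have w': "rword (vs @ [t]) \<circ> rword (t # us) = w"
      using w tn by (simp add: rword_snoc fun_eq_iff)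
    have "refl_length w \<le> refl_length (rword (vs @ [t])) + length (t # us)"
      by (rule lower[OF vs' us' w'])
    then have "factorization (vs @ [t], t # us)"
      using shorter len vs' us' w' by (simp add: factorization_def rword_snoc)
    then show False
      using p_min shorter by (fastforce simp: p rword_snoc)
  qed
  moreover have "refl_length (rword vs) \<le> refl_length (rword vs0)"
    using p_min[of "(vs0, us0)"] \<open>factorization (vs0, us0)\<close> by (simp add: p)
  ultimately show ?thesis
    using that vs us w len by (simp add: w_def)
qed

lemma coroot_cone_if_refl_length_le:
  assumes "ws \<in> lists {..<n}" and "i < n"
    and "refl_length (rword ws) \<le> refl_length (rword ws \<circ> r i)"
  shows "rword ws (\<alpha>v i) \<in> coroot_cone"
  using assms
proof (induction "refl_length (rword ws)" arbitrary: ws i rule: less_induct)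
  case less
  define w where "w = rword ws"
  obtain ws0 where ws0: "ws0 \<in> lists {..<n}" "length ws0 = refl_length w" "rword ws0 = w"
    using reduced_word_exists[OF less.prems(1)] unfolding w_def .
  show ?case
  proof (cases ws0 rule: rev_cases)
    case Nil
    then show ?thesis
      using ws0 less.prems(2) by (auto simp: w_def coroot_in_coroot_cone)
  next
    case (snoc ws1 j)
    have i: "i < n" and j: "j < n" and ws1: "ws1 \<in> lists {..<n}"
      using less.prems(2) ws0(1) snoc by auto
    have w_ws1: "w = rword ws1 \<circ> r j"
      using ws0 snoc by (simp add: rword_snoc)
    have len_ws1: "refl_length (rword ws1) + 1 = refl_length w"
      using refl_length_le[OF ws1] refl_length_comp_le[OF ws1, of "[j]"] j ws0(2) w_ws1 snoc
      by simp
    have ascent_w: "refl_length w \<le> refl_length (w \<circ> r i)"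
      using less.prems(3) by (simp add: w_def)
    have "i \<noteq> j"
    proof
      assume "i = j"
      then have "w \<circ> r i = rword ws1"
        using w_ws1 j by (simp add: comp_assoc r_comp_r)
      with ascent_w len_ws1 show False
        by simp
    qed
    obtain vs us where vs: "vs \<in> lists {..<n}" and us: "us \<in> lists {i, j}"
      and w_vs_us: "rword vs \<circ> rword us = w"
      and len_vs_us: "refl_length (rword vs) + length us = refl_length w"
      and vs_shorter: "refl_length (rword vs) \<le> refl_length (rword ws1)"
      and vs_ascent: "\<And>t. t \<in> {i, j} \<Longrightarrow> refl_length (rword vs) \<le> refl_length (rword vs \<circ> r t)"
      using minimal_parabolic_factorization[OF i j ws1, of "[j]"] len_ws1 w_ws1 by auto
    have "refl_length (rword vs) < refl_length (rword ws)"
      using vs_shorter len_ws1 by (simp add: w_def)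
    then have cone_i: "rword vs (\<alpha>v i) \<in> coroot_cone" and cone_j: "rword vs (\<alpha>v j) \<in> coroot_cone"
      using less.hyps[OF _ vs] vs_ascent i j by auto
    have lists_ij: "u \<in> lists {..<n}" if "u \<in> lists {i, j}" for u
      using that i j by auto
    have reduced: "length us \<le> length u"
      if "u \<in> lists {i, j}" "rword u = rword us" for u
      using refl_length_comp_le[OF vs lists_ij[OF that(1)]] that(2) w_vs_us len_vs_us by simp
    have ascent: "length us \<le> length u"
      if "u \<in> lists {i, j}" "rword u = rword us \<circ> r i" for u
    proof -
      have "rword vs \<circ> rword u = w \<circ> r i"
        using that(2) w_vs_us by (metis comp_assoc)
      then show ?thesis
        using refl_length_comp_le[OF vs lists_ij[OF that(1)]] len_vs_us ascent_w by simp
    qed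
    obtain A B where "A \<ge> 0" "B \<ge> 0" "rword us (\<alpha>v i) = A *\<^sub>R \<alpha>v i + B *\<^sub>R \<alpha>v j"
      using dihedral_coroot_in_cone[OF i j \<open>i \<noteq> j\<close> us reduced ascent] .
    moreover have "rword ws (\<alpha>v i) = rword vs (rword us (\<alpha>v i))"
      using fun_cong[OF w_vs_us, of "\<alpha>v i"] by (simp add: w_def)
    ultimately show ?thesis
      using cone_i cone_j linear_rword[OF vs]
      by (simp add: linear_add linear_scale coroot_cone_add coroot_cone_scaleR)
  qed
qed

lemma rword_eq_id_if_fixes_coroots:
  assumes ws: "ws \<in> lists {..<n}" and fixes_coroots: "\<And>i. i < n \<Longrightarrow> rword ws (\<alpha>v i) = \<alpha>v i"
  shows "rword ws = id"
proof (rule ccontr)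
  assume "rword ws \<noteq> id"
  obtain vs where vs: "vs \<in> lists {..<n}" "length vs = refl_length (rword ws)" "rword vs = rword ws"
    using reduced_word_exists[OF ws] .
  with \<open>rword ws \<noteq> id\<close> obtain vs1 i where vs1: "vs = vs1 @ [i]"
    by (metis rev_exhaust rword_Nil)
  have i: "i < n" and vs1_lists: "vs1 \<in> lists {..<n}"
    using vs vs1 by auto
  have "rword vs1 \<circ> r i = rword ws"
    using vs vs1 by (simp add: rword_snoc)
  then have vs1_ws: "rword vs1 = rword ws \<circ> r i"
    using i by (metis comp_assoc comp_id r_comp_r)
  have "refl_length (rword vs1) \<le> refl_length (rword vs1 \<circ> r i)"
    using refl_length_le[OF vs1_lists] vs vs1 vs1_ws i by (simp add: comp_assoc r_comp_r)
  then have "rword vs1 (\<alpha>v i) \<in> coroot_cone"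
    using coroot_cone_if_refl_length_le[OF vs1_lists i] by simp
  moreover have "rword vs1 (\<alpha>v i) = - \<alpha>v i"
    using vs1_ws fixes_coroots[OF i] i linear_neg[OF linear_rword[OF ws]] by (simp add: r_coroot)
  ultimately show False
    using neg_coroot_notin_coroot_cone[OF i] by simp
qed

section \<open>The coroot lattice\<close>

lemma coroot_lattice_diff:
  assumes "x \<in> coroot_lattice n \<alpha>v" and "i < n"
  shows "x - of_int c *\<^sub>R \<alpha>v i \<in> coroot_lattice n \<alpha>v"
proof -
  obtain k where x: "x = (\<Sum>m<n. of_int (k m) *\<^sub>R \<alpha>v m)"
    using assms(1) unfolding coroot_lattice_def by blast
  define k' where "k' m = k m - (if m = i then c else 0)" for m
  have "x - of_int c *\<^sub>R \<alpha>v i = (\<Sum>m<n. of_int (k' m) *\<^sub>R \<alpha>v m)"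
    using assms(2)
    by (simp add: x k'_def scaleR_diff_left sum_subtractf if_distrib[of of_int] sum_delta_coroot
        cong: if_cong)
  then show ?thesis
    unfolding coroot_lattice_def by blast
qed

lemma root_coroot_lattice_int:
  assumes "x \<in> coroot_lattice n \<alpha>v" and "i < n"
  shows "\<alpha> i x \<in> \<int>"
proof -
  obtain k where x: "x = (\<Sum>m<n. of_int (k m) *\<^sub>R \<alpha>v m)"
    using assms(1) unfolding coroot_lattice_def by blast
  then have "\<alpha> i x = of_int (\<Sum>m<n. k m * a m i)"
    using assms(2) by (simp add: linear_sum[OF linear_root] linear_scale[OF linear_root] root_coroot)
  then show ?thesis
    by (auto intro!: Ints_sum Ints_mult)
qed

lemma r_coroot_lattice:
  assumes "x \<in> coroot_lattice n \<alpha>v" and "i < n"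
  shows "r i x \<in> coroot_lattice n \<alpha>v"
  using root_coroot_lattice_int[OF assms] coroot_lattice_diff[OF assms]
  by (auto simp: r_apply elim: Ints_cases)

lemma rword_coroot_lattice:
  "ws \<in> lists {..<n} \<Longrightarrow> x \<in> coroot_lattice n \<alpha>v \<Longrightarrow> rword ws x \<in> coroot_lattice n \<alpha>v"
  by (induction ws arbitrary: x) (auto intro: r_coroot_lattice)

lemma coroot_in_coroot_lattice: "i < n \<Longrightarrow> \<alpha>v i \<in> coroot_lattice n \<alpha>v"
  using coroot_lattice_diff[of 0 i "-1"] unfolding coroot_lattice_def
  by (fastforce intro: exI[of _ "\<lambda>_. 0"])

lemma weyl_group_image_coroot_lattice:
  assumes "w \<in> weyl_group n \<alpha> \<alpha>v"
  shows "w ` coroot_lattice n \<alpha>v = coroot_lattice n \<alpha>v"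
proof -
  obtain ws where ws: "ws \<in> lists {..<n}" "rword ws = w"
    using weyl_group_rword[OF assms] .
  have "x = w (rword (rev ws) x)" for x
    using fun_cong[OF rword_comp_rev[OF ws(1)], of x] ws(2) by simp
  moreover have "rev ws \<in> lists {..<n}"
    using ws(1) by (simp add: in_lists_conv_set)
  ultimately show ?thesis
    using rword_coroot_lattice ws by (metis image_subset_iff subsetI subset_antisym image_eqI)
qed

lemma weyl_group_eq_if_eq_on_coroots:
  assumes w: "w \<in> weyl_group n \<alpha> \<alpha>v" and w': "w' \<in> weyl_group n \<alpha> \<alpha>v"
    and eq: "\<And>i. i < n \<Longrightarrow> w (\<alpha>v i) = w' (\<alpha>v i)"
  shows "w = w'"
proof -
  obtain ws ws' where ws: "ws \<in> lists {..<n}" "rword ws = w"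
    and ws': "ws' \<in> lists {..<n}" "rword ws' = w'"
    using weyl_group_rword w w' by metis
  have "rword (rev ws' @ ws) = id"
  proof (rule rword_eq_id_if_fixes_coroots)
    show "rev ws' @ ws \<in> lists {..<n}"
      using ws ws' by (auto simp: in_lists_conv_set)
    show "rword (rev ws' @ ws) (\<alpha>v i) = \<alpha>v i" if "i < n" for i
      using eq[OF that] fun_cong[OF rword_rev_comp[OF ws'(1)], of "\<alpha>v i"] ws ws'
      by (simp add: rword_append)
  qed
  then have "rword (rev ws') \<circ> w = id"
    using ws by (simp add: rword_append)
  then show ?thesis
    using rword_comp_rev[OF ws'(1)] ws' by (metis comp_assoc comp_id id_comp)
qed

end

theorem mainTheorem11:
  fixes n :: nat and a :: "nat \<Rightarrow> nat \<Rightarrow> int"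
    and \<alpha> :: "nat \<Rightarrow> 'a::euclidean_space \<Rightarrow> real" and \<alpha>v :: "nat \<Rightarrow> 'a"
  assumes "gen_cartan_matrix n a"
    and "gen_free_realization n a \<alpha> \<alpha>v"
  shows "(\<forall>w\<in>weyl_group n \<alpha> \<alpha>v. w ` coroot_lattice n \<alpha>v = coroot_lattice n \<alpha>v)
       \<and> inj_on (\<lambda>w. restrict w (coroot_lattice n \<alpha>v)) (weyl_group n \<alpha> \<alpha>v)"
proof -
  interpret cartan_realization n a \<alpha> \<alpha>v
    using assms by unfold_locales
  have "w = w'" if "w \<in> weyl_group n \<alpha> \<alpha>v" "w' \<in> weyl_group n \<alpha> \<alpha>v"
    and "restrict w (coroot_lattice n \<alpha>v) = restrict w' (coroot_lattice n \<alpha>v)" for w w'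
    using weyl_group_eq_if_eq_on_coroots[OF that(1,2)] coroot_in_coroot_lattice
      fun_cong[OF that(3)] by (metis restrict_apply')
  then show ?thesis
    using weyl_group_image_coroot_lattice by (auto intro: inj_onI)
qed

end
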